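(* Let $0<\alpha\le 5\pi/6$. Let $E^{nr}_\alpha\subseteq E_\alpha$ be the set of edges of $E_\alpha$ that are not redundant. Then for all $u,v\in V$: $u$ and $v$ are connected in $(V,E^{nr}_\alpha)$ if and only if they are connected in $G_R$. More precisely, for every redundant edge $\{u,v\}\in E_\alpha$ there is a path from $u$ to $v$ consisting only of edges in $E^{nr}_\alpha$.
   Context: Let $V$ be a finite set of pairwise distinct points (nodes) in the Euclidean plane, $d$ the Euclidean distance, and $R>0$. Let $G_R=(V,E)$ be the undirected graph with $E=\{\{u,v\}: u\neq v,\ d(u,v)\le R\}$. Fix a finite increasing sequence of radius levels $0<r_1<r_2<\dots<r_k=R$. For $u\in V$ and $1\le i\le k$ let $S_i(u)=\{v\in V\setminus\{u\}: d(u,v)\le r_i\}$. For $0<\alpha<2\pi$, a closed cone of width $\alpha$ with apex $u$ is a set $\{u+t(\cos\varphi,\sin\varphi): t\ge 0,\ \varphi\in[\theta-\alpha/2,\theta+\alpha/2]\}$ for some $\theta$. A finite set $S\subseteq V\setminus\{u\}$ has an $\alpha$-gap (at $u$) if some closed cone of width $\alpha$ with apex $u$ contains no node of $S$ (in particular $\emptyset$ has an $\alpha$-gap). The algorithm CBTC($\alpha$) assigns to each $u$ the index $i_u$ = the least $i\in\{1,\dots,k\}$ such that $S_i(u)$ has no $\alpha$-gap, or $i_u=k$ if there is no such $i$; set $N_\alpha(u)=S_{i_u}(u)$ and $N_\alpha=\{(u,v): v\in N_\alpha(u)\}$. Let $E_\alpha=\{\{u,v\}: (u,v)\in N_\alpha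 \text{ or } (v,u)\in N_\alpha\}$ (the symmetric closure of $N_\alpha$) and $G_\alpha=(V,E_\alpha)$. Each node $u$ has a distinct integer identifier $\mathrm{ID}_u$. The edge ID of $\{u,v\}$ is the triple $\mathrm{eid}(u,v)=(d(u,v),\max(\mathrm{ID}_u,\mathrm{ID}_v),\min(\mathrm{ID}_u,\mathrm{ID}_v))$, and edge IDs are compared lexicographically. An edge $\{u,v\}\in E_\alpha$ is redundant if, for one of its endpoints, say $u$, there is $w\in V$ with $\{u,w\}\in E_\alpha$, $\angle vuw<\pi/3$, and $\mathrm{eid}(u,v)>\mathrm{eid}(u,w)$. *)

theory Defs
  imports "HOL-Analysis.Analysis"
begin

text \<open>Points of the Euclidean plane are represented as complex numbers;
  d is the Euclidean distance (dist). Radius levels r 1 < ... < r k = R are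
  given by a function r on indices 1..k.\<close>

definition S_set :: "complex set \<Rightarrow> (nat \<Rightarrow> real) \<Rightarrow> nat \<Rightarrow> complex \<Rightarrow> complex set" where
  "S_set V r i u = {v \<in> V - {u}. dist u v \<le> r i}"

definition cone :: "complex \<Rightarrow> real \<Rightarrow> real \<Rightarrow> complex set" where
  "cone u theta alpha =
     {u + complex_of_real t * cis phi | t phi.
        t \<ge> 0 \<and> theta - alpha / 2 \<le> phi \<and> phi \<le> theta + alpha / 2}"

definition has_gap :: "complex \<Rightarrow> real \<Rightarrow> complex set \<Rightarrow> bool" where
  "has_gap u alpha S \<longleftrightarrow> (\<exists>theta. cone u theta alpha \<inter> S = {})"

definition cbtc_index :: "complex set \<Rightarrow> (nat \<Rightarrow> real) \<Rightarrow> nat \<Rightarrow> real \<Rightarrow> complex \<Rightarrow> nat" where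
  "cbtc_index V r k alpha u =
     (if \<exists>i\<in>{1..k}. \<not> has_gap u alpha (S_set V r i u)
      then (LEAST i. i \<in> {1..k} \<and> \<not> has_gap u alpha (S_set V r i u))
      else k)"

definition N_alpha :: "complex set \<Rightarrow> (nat \<Rightarrow> real) \<Rightarrow> nat \<Rightarrow> real \<Rightarrow> complex \<Rightarrow> complex set" where
  "N_alpha V r k alpha u = S_set V r (cbtc_index V r k alpha u) u"

definition E_alpha :: "complex set \<Rightarrow> (nat \<Rightarrow> real) \<Rightarrow> nat \<Rightarrow> real \<Rightarrow> complex \<Rightarrow> complex \<Rightarrow> bool" where
  "E_alpha V r k alpha u v \<longleftrightarrow>
     u \<in> V \<and> v \<in> V \<and> (v \<in> N_alpha V r k alpha u \<or> u \<in> N_alpha V r k alpha v)"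

definition E_R :: "complex set \<Rightarrow> real \<Rightarrow> complex \<Rightarrow> complex \<Rightarrow> bool" where
  "E_R V R u v \<longleftrightarrow> u \<in> V \<and> v \<in> V \<and> u \<noteq> v \<and> dist u v \<le> R"

definition vangle :: "complex \<Rightarrow> complex \<Rightarrow> complex \<Rightarrow> real" where
  "vangle v u w = arccos (((v - u) \<bullet> (w - u)) / (norm (v - u) * norm (w - u)))"

definition eid :: "(complex \<Rightarrow> int) \<Rightarrow> complex \<Rightarrow> complex \<Rightarrow> real \<times> int \<times> int" where
  "eid ID u v = (dist u v, max (ID u) (ID v), min (ID u) (ID v))"

definition lex_less :: "real \<times> int \<times> int \<Rightarrow> real \<times> int \<times> int \<Rightarrow> bool" where
  "lex_less a b \<longleftrightarrow>
     fst a < fst b \<or>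
     (fst a = fst b \<and> (fst (snd a) < fst (snd b) \<or>
        (fst (snd a) = fst (snd b) \<and> snd (snd a) < snd (snd b))))"

definition redundant_at :: "complex set \<Rightarrow> (nat \<Rightarrow> real) \<Rightarrow> nat \<Rightarrow> real \<Rightarrow> (complex \<Rightarrow> int)
    \<Rightarrow> complex \<Rightarrow> complex \<Rightarrow> bool" where
  "redundant_at V r k alpha ID u v \<longleftrightarrow>
     (\<exists>w\<in>V. E_alpha V r k alpha u w \<and> vangle v u w < pi / 3 \<and> lex_less (eid ID u w) (eid ID u v))"

definition redundant :: "complex set \<Rightarrow> (nat \<Rightarrow> real) \<Rightarrow> nat \<Rightarrow> real \<Rightarrow> (complex \<Rightarrow> int)
    \<Rightarrow> complex \<Rightarrow> complex \<Rightarrow> bool" where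
  "redundant V r k alpha ID u v \<longleftrightarrow>
     E_alpha V r k alpha u v \<and>
     (redundant_at V r k alpha ID u v \<or> redundant_at V r k alpha ID v u)"

definition E_nr :: "complex set \<Rightarrow> (nat \<Rightarrow> real) \<Rightarrow> nat \<Rightarrow> real \<Rightarrow> (complex \<Rightarrow> int)
    \<Rightarrow> complex \<Rightarrow> complex \<Rightarrow> bool" where
  "E_nr V r k alpha ID u v \<longleftrightarrow> E_alpha V r k alpha u v \<and> \<not> redundant V r k alpha ID u v"

end

theory Submission
  imports Defs
begin

(* Every edge {u, v} of G_R is joined by a path of non-redundant edges, by induction along the
   lexicographic order of edge IDs. A redundant edge is bypassed through its witness w: the angle
   vuw < pi/3 together with |uw| <= |uv| forces |wv| < |uv|. If {u, v} is not an edge of G_alpha,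
   then u and v stopped at radii below |uv| with their neighbourhoods leaving no alpha-gap.
   Normalising u = 0 and v = 1, the neighbours of u angularly nearest to the segment uv on either
   side of it are at most alpha apart, and likewise at v; as 2 alpha <= 5 pi/3, on one side of uv
   there are neighbours x of u and y of v whose angles to uv sum to at most 5 pi/6. A bilinear
   estimate over the box of admissible radii then gives |xy| < |uv|, so u - x - y - v is a path
   of shorter edges. *)

section \<open>Two neighbourhoods without gaps contain a close pair\<close>

lemma bilinear_neg_on_box:
  fixes h :: "real \<Rightarrow> real \<Rightarrow> real"
  assumes h: "\<And>x y. h x y = a + b * x + c * y + e * x * y"
    and "h x0 y0 < 0" "h x1 y0 \<le> 0" "h x0 y1 \<le> 0" "h x1 y1 \<le> 0"
    and "x0 \<le> x" "x < x1" "y0 \<le> y" "y < y1"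
  shows "h x y < 0"
proof -
  have "(x1 - x0) * (y1 - y0) * h x y = (x1 - x) * (y1 - y) * h x0 y0 + (x - x0) * (y1 - y) * h x1 y0
      + (x1 - x) * (y - y0) * h x0 y1 + (x - x0) * (y - y0) * h x1 y1"
    unfolding h by algebra
  moreover have "(x1 - x) * (y1 - y) * h x0 y0 < 0"
    using assms by (simp add: mult_pos_neg)
  moreover have "(x - x0) * (y1 - y) * h x1 y0 \<le> 0" "(x1 - x) * (y - y0) * h x0 y1 \<le> 0"
    "(x - x0) * (y - y0) * h x1 y1 \<le> 0"
    using assms by (simp_all add: mult_nonneg_nonpos)
  ultimately have "(x1 - x0) * (y1 - y0) * h x y < 0"
    by linarith
  then show ?thesis
    using assms by (simp add: mult_less_0_iff)
qed

lemma cos_add_mult_cos_bound: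
  fixes x y :: real
  assumes "pi / 3 < x" "pi / 3 < y" "y < pi / 2" "x + y \<le> 5 * pi / 6"
  shows "1 - 2 * cos x + 4 * cos (x + y) * cos y \<le> 0"
proof -
  have "2 * cos (x + y) * cos y = cos x + cos (x + 2 * y)"
    using cos_add[of "x + y" y] cos_diff[of "x + y" y] by (simp add: algebra_simps)
  moreover have "cos (pi / 3) \<le> cos (x + 2 * y - pi)"
    using assms by (intro cos_monotone_0_pi_le) auto
  ultimately show ?thesis
    by (simp add: cos_60)
qed

lemma one_minus_cos_mult_le_sin_mult:
  fixes a b :: real
  assumes "0 \<le> cos a" "0 \<le> cos b" "0 \<le> sin a" "0 \<le> sin b"
  shows "(1 - cos a) * (1 - cos b) \<le> sin a * sin b"
proof (rule power2_le_imp_le)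
  have "(1 - cos a) * (1 - cos b) \<le> (1 + cos a) * (1 + cos b)"
    using assms by (simp add: algebra_simps)
  then have "((1 - cos a) * (1 - cos b))\<^sup>2 \<le> (1 - cos a) * (1 - cos b) * ((1 + cos a) * (1 + cos b))"
    unfolding power2_eq_square by (rule mult_left_mono) simp
  also have "\<dots> = (sin a * sin b)\<^sup>2"
    using sin_squared_eq[of a] sin_squared_eq[of b] by algebra
  finally show "((1 - cos a) * (1 - cos b))\<^sup>2 \<le> (sin a * sin b)\<^sup>2" .
  show "0 \<le> sin a * sin b"
    using assms by simp
qed

lemma polar_pair_close:
  fixes r1 r2 a1 a2 :: real
  assumes r: "r1 < 1" "r2 < 1" "2 * cos a1 \<le> r1" "2 * cos a2 \<le> r2"
    and a: "pi / 3 < a1" "pi / 3 < a2" "a1 + a2 \<le> 5 * pi / 6"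
  shows "norm (of_real r1 * cis a1 + of_real r2 * cis (- a2) - 1) < 1"
proof -
  define C where "C = cos (a1 + a2)"
  define h where "h x y = (x - 2 * cos a1) + (y - 2 * cos a2) + 2 * C * x * y" for x y
  \<comment> \<open>The squared norm is 1 + h r1 r2 plus two non-positive terms, and the bilinear h is negative
    on the box [2 cos a1, 1) x [2 cos a2, 1) since it is so at the corners.\<close>
  have a_lt: "a1 < pi / 2" "a2 < pi / 2"
    using a by auto
  then have cos_pos: "0 < cos a1" "0 < cos a2"
    using a by (auto intro!: cos_gt_zero_pi)
  have sin_pos: "0 < sin a1" "0 < sin a2"
    using a a_lt by (auto intro!: sin_gt_zero)
  have "C < cos (pi / 2)"
    unfolding C_def using a by (intro cos_monotone_0_pi) auto
  then have h00: "h (2 * cos a1) (2 * cos a2) < 0"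
    using cos_pos by (simp add: h_def mult_neg_pos)
  have h10: "h 1 (2 * cos a2) \<le> 0"
    using cos_add_mult_cos_bound[of a1 a2] a a_lt by (simp add: h_def C_def)
  have h01: "h (2 * cos a1) 1 \<le> 0"
    using cos_add_mult_cos_bound[of a2 a1] a a_lt by (simp add: h_def C_def add.commute)
  have h11: "h 1 1 \<le> 0"
    using one_minus_cos_mult_le_sin_mult[of a1 a2] cos_pos sin_pos
    by (simp add: h_def C_def cos_add algebra_simps)
  have "h r1 r2 < 0"
    by (rule bilinear_neg_on_box[of h _ 1 1 "2 * C", OF _ h00 h10 h01 h11])
      (use r in \<open>simp_all add: h_def\<close>)
  moreover have "(norm (of_real r1 * cis a1 + of_real r2 * cis (- a2) - 1))\<^sup>2
      = (r1 * cos a1 + r2 * cos a2 - 1)\<^sup>2 + (r1 * sin a1 - r2 * sin a2)\<^sup>2"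
    by (simp add: cmod_power2)
  moreover have "\<dots> = 1 + h r1 r2 + (r1 - 2 * cos a1) * (r1 - 1) + (r2 - 2 * cos a2) * (r2 - 1)"
    unfolding h_def C_def cos_add using sin_cos_squared_add[of a1] sin_cos_squared_add[of a2]
    by algebra
  moreover have "(r1 - 2 * cos a1) * (r1 - 1) \<le> 0" "(r2 - 2 * cos a2) * (r2 - 1) \<le> 0"
    using r by (simp_all add: mult_nonneg_nonpos)
  ultimately have "(norm (of_real r1 * cis a1 + of_real r2 * cis (- a2) - 1))\<^sup>2 < 1"
    by linarith
  then show ?thesis
    by (simp add: abs_square_less_1)
qed

(* Normalising u = 0 and v = 1, this is where the relevant neighbours of u lie when {u, v} is
   an edge of G_R but not of G_alpha. *)
definition lune :: "complex set" where
  "lune = {z. z \<noteq> 0 \<and> norm z < 1 \<and> 1 \<le> norm (z - 1)}"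

lemma lune_two_cos_Arg_le_norm:
  assumes "z \<in> lune"
  shows "2 * cos (Arg z) \<le> norm z"
proof -
  have z: "z \<noteq> 0" "1 \<le> norm (z - 1)"
    using assms by (auto simp: lune_def)
  have "Re z = norm z * cos (Arg z)"
    using z(1) by (metis Re_rcis rcis_cmod_Arg)
  moreover have "(norm (z - 1))\<^sup>2 = (norm z)\<^sup>2 - 2 * Re z + 1"
    unfolding cmod_power2 by (simp add: power2_eq_square algebra_simps)
  moreover have "1 \<le> (norm (z - 1))\<^sup>2"
    using z(2) by (simp add: one_le_power)
  ultimately have "norm z * (2 * cos (Arg z)) \<le> norm z * norm z"
    by (simp add: power2_eq_square algebra_simps)
  then show ?thesis
    using z(1) by simp
qed

lemma lune_pi_third_less_abs_Arg:
  assumes "z \<in> lune"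
  shows "pi / 3 < \<bar>Arg z\<bar>"
proof (rule ccontr)
  assume "\<not> pi / 3 < \<bar>Arg z\<bar>"
  then have "cos (pi / 3) \<le> cos \<bar>Arg z\<bar>"
    by (intro cos_monotone_0_pi_le) auto
  moreover have "2 * cos \<bar>Arg z\<bar> < 1"
    using lune_two_cos_Arg_le_norm[OF assms] assms by (simp add: lune_def abs_if)
  ultimately show False
    by (simp add: cos_60)
qed

lemma lune_pair_close:
  assumes "X \<in> lune" "Y \<in> lune" "0 \<le> Arg X" "Arg Y < 0" "Arg X - Arg Y \<le> 5 * pi / 6"
  shows "norm (X + Y - 1) < 1"
proof -
  have "norm (of_real (norm X) * cis (Arg X) + of_real (norm Y) * cis (- (- Arg Y)) - 1) < 1"
    using assms lune_two_cos_Arg_le_norm[of X] lune_two_cos_Arg_le_norm[of Y]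
      lune_pi_third_less_abs_Arg[of X] lune_pi_third_less_abs_Arg[of Y]
    by (intro polar_pair_close) (auto simp: lune_def)
  then show ?thesis
    by (simp add: rcis_cmod_Arg[unfolded rcis_def])
qed

lemma Arg_bounds_in_cone:
  assumes "z \<in> cone 0 th al" "z \<noteq> 0" "- pi < th - al / 2" "th + al / 2 \<le> pi"
  shows "th - al / 2 \<le> Arg z \<and> Arg z \<le> th + al / 2"
proof -
  obtain t ph where z: "z = of_real t * cis ph" "0 \<le> t" "th - al / 2 \<le> ph" "ph \<le> th + al / 2"
    using assms(1) unfolding cone_def by auto
  with assms have "Arg z = ph"
    by (auto simp: Arg_cis)
  with z show ?thesis
    by simp
qed

lemma no_gap_normalize:
  assumes "u \<noteq> v" "\<not> has_gap u al A"
  shows "\<not> has_gap 0 al ((\<lambda>z. (z - u) / (v - u)) ` A)"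
proof -
  define d where "d = norm (v - u)"
  define b where "b = Arg (v - u)"
  have "0 < d"
    using assms(1) by (simp add: d_def)
  have vu: "v - u = of_real d * cis b"
    unfolding d_def b_def by (metis rcis_cmod_Arg rcis_def)
  have "cone 0 th al \<inter> (\<lambda>z. (z - u) / (v - u)) ` A \<noteq> {}" for th
  proof -
    obtain z t ph where z: "z \<in> A" "z = u + of_real t * cis ph" "0 \<le> t"
      "th + b - al / 2 \<le> ph" "ph \<le> th + b + al / 2"
      using assms(2) unfolding has_gap_def cone_def by blast
    then have "(z - u) / (v - u) = of_real (t / d) * cis (ph - b)"
      using \<open>0 < d\<close> by (simp add: vu cis_divide[symmetric])
    also have "\<dots> \<in> cone 0 th al"
      unfolding cone_def mem_Collect_eq
      by (rule exI[of _ "t / d"], rule exI[of _ "ph - b"]) (use z \<open>0 < d\<close> in auto)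
    finally show ?thesis
      using z(1) by blast
  qed
  then show ?thesis
    unfolding has_gap_def by blast
qed

lemma no_gap_Arg_pair:
  assumes "finite S" "0 \<notin> S" "al < pi" "\<not> has_gap 0 al S"
  shows "\<exists>x\<in>S. \<exists>y\<in>S. 0 \<le> Arg x \<and> Arg y < 0 \<and> Arg x - Arg y \<le> al"
proof -
  have cover: "\<exists>z\<in>S. th - al / 2 \<le> Arg z \<and> Arg z \<le> th + al / 2"
    if "- pi < th - al / 2" "th + al / 2 \<le> pi" for th
  proof -
    obtain z where "z \<in> cone 0 th al" "z \<in> S"
      using assms(4) unfolding has_gap_def by blast
    with that assms(2) show ?thesis
      using Arg_bounds_in_cone by metis
  qed
  define U where "U = {z \<in> S. 0 \<le> Arg z}"
  define L where "L = {z \<in> S. Arg z < 0}"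
  have "U \<noteq> {}"
  proof -
    obtain z where "z \<in> S" "pi / 2 - al / 2 \<le> Arg z"
      using cover[of "pi / 2"] assms(3) pi_gt_zero by auto
    with assms(3) show ?thesis
      by (auto simp: U_def)
  qed
  moreover have "L \<noteq> {}"
  proof -
    obtain z where "z \<in> S" "Arg z \<le> - pi / 2 + al / 2"
      using cover[of "- pi / 2"] assms(3) pi_gt_zero by auto
    with assms(3) show ?thesis
      by (auto simp: L_def)
  qed
  ultimately obtain x y where x: "is_arg_min Arg (\<lambda>z. z \<in> U) x"
    and y: "is_arg_min (\<lambda>z. - Arg z) (\<lambda>z. z \<in> L) y"
    using ex_is_arg_min_if_finite[of U Arg] ex_is_arg_min_if_finite[of L "\<lambda>z. - Arg z"] assms(1)
    by (auto simp: U_def L_def)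
  have "Arg x - Arg y \<le> al"
  proof (rule ccontr)
    assume gap: "\<not> Arg x - Arg y \<le> al"
    have "- pi < (Arg x + Arg y) / 2 - al / 2" "(Arg x + Arg y) / 2 + al / 2 \<le> pi"
      using gap Arg_le_pi[of x] mpi_less_Arg[of y] by (simp_all add: field_simps)
    then obtain z where z: "z \<in> S" "(Arg x + Arg y) / 2 - al / 2 \<le> Arg z"
      "Arg z \<le> (Arg x + Arg y) / 2 + al / 2"
      using cover by blast
    then have "Arg y < Arg z" "Arg z < Arg x"
      using gap by (simp_all add: field_simps)
    with x y \<open>z \<in> S\<close> show False
      by (cases "0 \<le> Arg z") (auto simp: U_def L_def is_arg_min_def)
  qed
  with x y show ?thesis
    by (auto simp: U_def L_def is_arg_min_def)
qed

lemma norm_normalized_diff: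
  fixes x y u v :: complex
  shows "norm ((x - u) / (v - u) - (y - u) / (v - u)) = dist x y / dist u v"
  by (simp add: diff_divide_distrib[symmetric] norm_divide dist_norm norm_minus_commute[of u v])

lemma normalized_in_lune:
  assumes "x \<noteq> u" "dist u x < dist u v" "dist u v \<le> dist x v"
  shows "(x - u) / (v - u) \<in> lune"
proof -
  have "u \<noteq> v"
    using assms(2) by auto
  then have "norm ((x - u) / (v - u)) = dist x u / dist u v"
    and "norm ((x - u) / (v - u) - 1) = dist x v / dist u v"
    using norm_normalized_diff[of x u v u] norm_normalized_diff[of x u v v] by simp_all
  with assms \<open>u \<noteq> v\<close> show ?thesis
    by (simp add: lune_def dist_commute)
qed

lemma close_pair_if_no_gaps:
  assumes "u \<noteq> v" "finite A" "finite B" "al \<le> 5 * pi / 6"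
    and "\<not> has_gap u al A" "\<not> has_gap v al B"
    and A: "\<And>x. x \<in> A \<Longrightarrow> x \<noteq> u \<and> dist u x < dist u v \<and> dist u v \<le> dist x v"
    and B: "\<And>y. y \<in> B \<Longrightarrow> y \<noteq> v \<and> dist v y < dist u v \<and> dist u v \<le> dist y u"
  shows "\<exists>x\<in>A. \<exists>y\<in>B. dist x y < dist u v"
proof -
  define T where "T z = (z - u) / (v - u)" for z
  define T' where "T' z = (z - v) / (u - v)" for z
  have lune: "T x \<in> lune" if "x \<in> A" for x
    using A[OF that] unfolding T_def by (intro normalized_in_lune) auto
  have lune': "T' y \<in> lune" if "y \<in> B" for y
    using B[OF that] unfolding T'_def by (intro normalized_in_lune) (auto simp: dist_commute)
  have close: "dist x y < dist u v" if "norm (T x + T' y - 1) < 1" for x y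
  proof -
    have "T' y = 1 - T y"
      using \<open>u \<noteq> v\<close> by (simp add: T_def T'_def field_simps)
    with that norm_normalized_diff[of x u v y] \<open>u \<noteq> v\<close> show ?thesis
      by (simp add: T_def)
  qed
  obtain x1 x2 where x: "x1 \<in> A" "x2 \<in> A" "0 \<le> Arg (T x1)" "Arg (T x2) < 0"
    "Arg (T x1) - Arg (T x2) \<le> al"
    using no_gap_Arg_pair[of "T ` A" al] no_gap_normalize[OF \<open>u \<noteq> v\<close> assms(5)] lune
      assms(2,4) pi_gt_zero unfolding T_def by (force simp: lune_def)
  obtain y1 y2 where y: "y1 \<in> B" "y2 \<in> B" "0 \<le> Arg (T' y1)" "Arg (T' y2) < 0"
    "Arg (T' y1) - Arg (T' y2) \<le> al"
    using no_gap_Arg_pair[of "T' ` B" al] no_gap_normalize[OF \<open>u \<noteq> v\<close>[symmetric] assms(6)] lune'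
      assms(3,4) pi_gt_zero unfolding T'_def by (force simp: lune_def)
  \<comment> \<open>The two crossed differences add up to the two angular spreads, at most 2 al \<le> 5 pi / 3.\<close>
  consider "Arg (T x1) - Arg (T' y2) \<le> 5 * pi / 6" | "Arg (T' y1) - Arg (T x2) \<le> 5 * pi / 6"
    using x y assms(4) by linarith
  then show ?thesis
  proof cases
    case 1
    then have "norm (T x1 + T' y2 - 1) < 1"
      using x y lune lune' by (intro lune_pair_close) auto
    with x y close show ?thesis
      by blast
  next
    case 2
    then have "norm (T' y1 + T x2 - 1) < 1"
      using x y lune lune' by (intro lune_pair_close) auto
    with x y close show ?thesis
      by (metis add.commute)
  qed
qed

section \<open>Connectivity of the non-redundant edges\<close>

lemma dist_less_if_vangle_less:
  assumes "vangle v u w < pi / 3" "dist u w \<le> dist u v"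
  shows "dist w v < dist u v"
proof -
  define a where "a = v - u"
  define b where "b = w - u"
  define q where "q = (a \<bullet> b) / (norm a * norm b)"
  have angle: "arccos q < pi / 3"
    using assms(1) by (simp add: vangle_def q_def a_def b_def)
  then have "a \<noteq> 0" "b \<noteq> 0"
    \<comment> \<open>otherwise q = 0 by division by zero, and arccos 0 = pi / 2\<close>
    by (auto simp: q_def)
  then have "\<bar>q\<bar> \<le> 1"
    unfolding q_def using Cauchy_Schwarz_ineq2[of a b] by (simp add: abs_div divide_le_eq_1)
  moreover have "arccos q < arccos (1 / 2)"
    using angle arccos_cos[of "pi / 3"] by (simp add: cos_60)
  ultimately have "1 / 2 < q"
    using arccos_less_mono[of q "1 / 2"] by simp
  with \<open>a \<noteq> 0\<close> \<open>b \<noteq> 0\<close> have ab: "norm a * norm b < 2 * (a \<bullet> b)"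
    by (simp add: q_def field_simps)
  have "norm b \<le> norm a"
    using assms(2) by (simp add: a_def b_def dist_norm norm_minus_commute)
  have "(norm (b - a))\<^sup>2 = (norm b)\<^sup>2 + (norm a)\<^sup>2 - 2 * (a \<bullet> b)"
    by (simp add: power2_norm_eq_inner inner_diff_left inner_diff_right inner_commute)
  also have "\<dots> < (norm a)\<^sup>2 + norm b * (norm b - norm a)"
    using ab by (simp add: power2_eq_square algebra_simps)
  also have "\<dots> \<le> (norm a)\<^sup>2"
    using \<open>norm b \<le> norm a\<close> by (simp add: mult_nonneg_nonpos)
  finally have "norm (b - a) < norm a"
    by (simp add: power_less_imp_less_base)
  then show ?thesis
    by (simp add: a_def b_def dist_norm norm_minus_commute)
qed

lemma lex_less_trans: "lex_less a b \<Longrightarrow> lex_less b c \<Longrightarrow> lex_less a c"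
  unfolding lex_less_def by auto

lemma lex_less_irrefl: "\<not> lex_less a a"
  unfolding lex_less_def by auto

lemma eid_commute: "eid ID a b = eid ID b a"
  unfolding eid_def by (auto simp: dist_commute)

lemma lex_less_eid_if_dist_less: "dist a b < dist u v \<Longrightarrow> lex_less (eid ID a b) (eid ID u v)"
  unfolding lex_less_def eid_def by auto

lemma dist_le_if_lex_less_eid: "lex_less (eid ID a b) (eid ID u v) \<Longrightarrow> dist a b \<le> dist u v"
  unfolding lex_less_def eid_def by auto

definition edge_order :: "complex set \<Rightarrow> (complex \<Rightarrow> int) \<Rightarrow> ((complex \<times> complex) \<times> (complex \<times> complex)) set"
  where "edge_order V ID =
    {((a, b), (u, v)). a \<in> V \<and> b \<in> V \<and> u \<in> V \<and> v \<in> V \<and> lex_less (eid ID a b) (eid ID u v)}"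

lemma wf_edge_order:
  assumes "finite V"
  shows "wf (edge_order V ID)"
proof (rule finite_acyclic_wf)
  show "finite (edge_order V ID)"
    by (rule finite_subset[of _ "(V \<times> V) \<times> (V \<times> V)"]) (auto simp: edge_order_def assms)
  have "trans (edge_order V ID)"
    by (auto simp: trans_def edge_order_def intro: lex_less_trans)
  then show "acyclic (edge_order V ID)"
    by (simp add: acyclic_def edge_order_def lex_less_irrefl)
qed

lemma rtranclp_if_descending_detours:
  assumes "wf lt"
    and detour: "\<And>u v. Q u v \<Longrightarrow> P u v \<or> (\<lambda>a b. Q a b \<and> ((a, b), (u, v)) \<in> lt)\<^sup>*\<^sup>* u v"
  shows "Q u v \<Longrightarrow> P\<^sup>*\<^sup>* u v"
proof (induction "(u, v)" arbitrary: u v rule: wf_induct_rule[OF assms(1)])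
  case (1 u v)
  have "(\<lambda>a b. Q a b \<and> ((a, b), (u, v)) \<in> lt) \<le> P\<^sup>*\<^sup>*"
    using "1.hyps" by auto
  then have "(\<lambda>a b. Q a b \<and> ((a, b), (u, v)) \<in> lt)\<^sup>*\<^sup>* \<le> (P\<^sup>*\<^sup>*)\<^sup>*\<^sup>*"
    by (rule rtranclp_mono)
  with detour[OF "1.prems"] show ?case
    by auto
qed

lemma cbtc_index_no_gap:
  assumes "\<exists>i\<in>{1..k}. \<not> has_gap u al (S_set V r i u)"
  shows "cbtc_index V r k al u \<in> {1..k}" "\<not> has_gap u al (N_alpha V r k al u)"
proof -
  let ?P = "\<lambda>i. i \<in> {1..k} \<and> \<not> has_gap u al (S_set V r i u)"
  obtain i where "?P i"
    using assms by blast
  then have "?P (LEAST i. ?P i)"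
    by (rule LeastI)
  with assms show "cbtc_index V r k al u \<in> {1..k}" "\<not> has_gap u al (N_alpha V r k al u)"
    by (simp_all add: cbtc_index_def N_alpha_def)
qed

locale cbtc_setting =
  fixes V :: "complex set" and r :: "nat \<Rightarrow> real" and k :: nat and R :: real
  assumes finite_V: "finite V"
    and k_pos: "1 \<le> k"
    and r_less: "\<And>i j. 1 \<le> i \<Longrightarrow> i < j \<Longrightarrow> j \<le> k \<Longrightarrow> r i < r j"
    and r_k: "r k = R"
begin

abbreviation E_R_below :: "(complex \<Rightarrow> int) \<Rightarrow> complex \<Rightarrow> complex \<Rightarrow> complex \<Rightarrow> complex \<Rightarrow> bool" where
  "E_R_below ID u v a b \<equiv> E_R V R a b \<and> ((a, b), (u, v)) \<in> edge_order V ID"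

lemma r_cbtc_index_le: "r (cbtc_index V r k al u) \<le> R"
proof -
  have "cbtc_index V r k al u \<in> {1..k}"
    using cbtc_index_no_gap(1) k_pos by (cases "\<exists>i\<in>{1..k}. \<not> has_gap u al (S_set V r i u)")
      (auto simp: cbtc_index_def)
  then show ?thesis
    using r_less[of "cbtc_index V r k al u" k] r_k by (cases "cbtc_index V r k al u = k") auto
qed

lemma E_alpha_imp_E_R: "E_alpha V r k al u v \<Longrightarrow> E_R V R u v"
  using r_cbtc_index_le[of al u] r_cbtc_index_le[of al v]
  unfolding E_alpha_def E_R_def N_alpha_def S_set_def by (auto simp: dist_commute)

lemma no_gap_closer_if_not_in_N_alpha:
  assumes "v \<in> V" "v \<noteq> u" "dist u v \<le> R" "v \<notin> N_alpha V r k al u"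
  shows "\<not> has_gap u al (N_alpha V r k al u)" "\<And>x. x \<in> N_alpha V r k al u \<Longrightarrow> dist u x < dist u v"
proof -
  have far: "r (cbtc_index V r k al u) < dist u v"
    using assms by (auto simp: N_alpha_def S_set_def)
  have "\<exists>i\<in>{1..k}. \<not> has_gap u al (S_set V r i u)"
  proof (rule ccontr)
    assume "\<not> ?thesis"
    then have "cbtc_index V r k al u = k"
      by (simp add: cbtc_index_def)
    with far r_k assms(3) show False
      by simp
  qed
  then show "\<not> has_gap u al (N_alpha V r k al u)"
    by (rule cbtc_index_no_gap)
  show "dist u x < dist u v" if "x \<in> N_alpha V r k al u" for x
    using that far by (simp add: N_alpha_def S_set_def)
qed

lemma short_path_if_not_E_alpha:
  assumes "E_R V R u v" "\<not> E_alpha V r k al u v" "al \<le> 5 * pi / 6"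
  shows "\<exists>x\<in>V. \<exists>y\<in>V. dist u x < dist u v \<and> dist x y < dist u v \<and> dist y v < dist u v"
proof -
  let ?Nu = "N_alpha V r k al u" and ?Nv = "N_alpha V r k al v"
  have uv: "u \<in> V" "v \<in> V" "u \<noteq> v" "dist u v \<le> R"
    using assms(1) by (auto simp: E_R_def)
  moreover have "v \<notin> ?Nu" "u \<notin> ?Nv"
    using assms(2) uv by (auto simp: E_alpha_def)
  ultimately have Nu: "\<not> has_gap u al ?Nu" "\<And>x. x \<in> ?Nu \<Longrightarrow> dist u x < dist u v"
    and Nv: "\<not> has_gap v al ?Nv" "\<And>y. y \<in> ?Nv \<Longrightarrow> dist v y < dist u v"
    using no_gap_closer_if_not_in_N_alpha[of v u al] no_gap_closer_if_not_in_N_alpha[of u v al]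
    by (auto simp: dist_commute)
  have N_sub: "?Nu \<subseteq> V - {u}" "?Nv \<subseteq> V - {v}"
    by (auto simp: N_alpha_def S_set_def)
  consider (near_v) x where "x \<in> ?Nu" "dist x v < dist u v"
    | (near_u) y where "y \<in> ?Nv" "dist u y < dist u v"
    | (neither) "\<forall>x\<in>?Nu. dist u v \<le> dist x v" "\<forall>y\<in>?Nv. dist u v \<le> dist y u"
    by (force simp: dist_commute)
  then show ?thesis
  proof cases
    case near_v
    then have "x \<in> V" "dist u x < dist u v"
      using N_sub Nu(2) by auto
    with uv near_v show ?thesis
      by force
  next
    case near_u
    then have "y \<in> V" "dist y v < dist u v"
      using N_sub Nv(2)[OF near_u(1)] by (auto simp: dist_commute)
    with uv near_u show ?thesis
      by force
  next
    case neither
    have "finite ?Nu" "finite ?Nv"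
      using N_sub finite_V by (auto intro: finite_subset)
    then obtain x y where xy: "x \<in> ?Nu" "y \<in> ?Nv" "dist x y < dist u v"
      using close_pair_if_no_gaps[of u v ?Nu ?Nv al] uv assms(3) Nu Nv N_sub neither by blast
    then have "x \<in> V" "y \<in> V" "dist u x < dist u v" "dist y v < dist u v"
      using N_sub Nu(2)[OF xy(1)] Nv(2)[OF xy(2)] by (auto simp: dist_commute)
    with xy show ?thesis
      by blast
  qed
qed

lemma redundant_at_detour:
  assumes "redundant_at V r k al ID u v"
  shows "\<exists>w\<in>V. E_R V R u w \<and> lex_less (eid ID u w) (eid ID u v) \<and> dist w v < dist u v"
proof -
  obtain w where w: "w \<in> V" "E_alpha V r k al u w" "vangle v u w < pi / 3"
    "lex_less (eid ID u w) (eid ID u v)"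
    using assms unfolding redundant_at_def by blast
  then have "dist w v < dist u v"
    by (intro dist_less_if_vangle_less dist_le_if_lex_less_eid)
  with w show ?thesis
    using E_alpha_imp_E_R by blast
qed

lemma E_R_below_path:
  assumes "E_R V R u v" "a \<in> V" "b \<in> V" "dist a b < dist u v"
  shows "(E_R_below ID u v)\<^sup>*\<^sup>* a b"
proof (cases "a = b")
  case False
  with assms have "E_R_below ID u v a b"
    by (auto simp: E_R_def edge_order_def lex_less_eid_if_dist_less)
  then show ?thesis
    by blast
qed simp

lemma E_R_edge_detour:
  assumes "E_R V R u v" "al \<le> 5 * pi / 6"
  shows "E_nr V r k al ID u v \<or> (E_R_below ID u v)\<^sup>*\<^sup>* u v"
proof -
  have uv: "u \<in> V" "v \<in> V"
    using assms(1) by (auto simp: E_R_def)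
  consider (non_redundant) "E_nr V r k al ID u v"
    | (at_u) "redundant_at V r k al ID u v" | (at_v) "redundant_at V r k al ID v u"
    | (not_E_alpha) "\<not> E_alpha V r k al u v"
    unfolding E_nr_def redundant_def by blast
  then show ?thesis
  proof cases
    case non_redundant
    then show ?thesis ..
  next
    case at_u
    then obtain w where w: "w \<in> V" "E_R V R u w" "lex_less (eid ID u w) (eid ID u v)"
      "dist w v < dist u v"
      using redundant_at_detour by blast
    then have "E_R_below ID u v u w"
      using uv by (simp add: edge_order_def)
    then have "(E_R_below ID u v)\<^sup>*\<^sup>* u v"
      using E_R_below_path[OF assms(1) w(1) uv(2) w(4)]
      by (rule converse_rtranclp_into_rtranclp[of "E_R_below ID u v"])
    then show ?thesis ..
  next
    case at_v
    then obtain w where w: "w \<in> V" "E_R V R v w" "lex_less (eid ID v w) (eid ID v u)"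
      "dist w u < dist v u"
      using redundant_at_detour by blast
    then have "E_R_below ID u v w v"
      using uv by (auto simp: edge_order_def E_R_def eid_commute dist_commute)
    moreover have "(E_R_below ID u v)\<^sup>*\<^sup>* u w"
      using E_R_below_path[OF assms(1) uv(1) w(1)] w(4) by (simp add: dist_commute)
    ultimately have "(E_R_below ID u v)\<^sup>*\<^sup>* u v"
      by (simp add: rtranclp.rtrancl_into_rtrancl[of "E_R_below ID u v"])
    then show ?thesis ..
  next
    case not_E_alpha
    then obtain x y where "x \<in> V" "y \<in> V" "dist u x < dist u v" "dist x y < dist u v"
      "dist y v < dist u v"
      using short_path_if_not_E_alpha assms by blast
    with E_R_below_path[OF assms(1)] uv have "(E_R_below ID u v)\<^sup>*\<^sup>* u v"
      by (meson rtranclp_trans)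
    then show ?thesis ..
  qed
qed

end

theorem theorem5:
  fixes V :: "complex set" and r :: "nat \<Rightarrow> real" and k :: nat and R alpha :: real
    and ID :: "complex \<Rightarrow> int"
  assumes "finite V"
    and "k \<ge> 1"
    and "r 1 > 0"
    and "\<And>i j. 1 \<le> i \<Longrightarrow> i < j \<Longrightarrow> j \<le> k \<Longrightarrow> r i < r j"
    and "r k = R"
    and "inj_on ID V"
    and "0 < alpha" and "alpha \<le> 5 * pi / 6"
  shows "(\<forall>u\<in>V. \<forall>v\<in>V. (E_nr V r k alpha ID)\<^sup>*\<^sup>* u v \<longleftrightarrow> (E_R V R)\<^sup>*\<^sup>* u v)
       \<and> (\<forall>u v. redundant V r k alpha ID u v \<longrightarrow> (E_nr V r k alpha ID)\<^sup>*\<^sup>* u v)"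
proof -
  interpret cbtc_setting V r k R
    using assms by unfold_locales
  have E_nr_path_if_E_R: "(E_nr V r k alpha ID)\<^sup>*\<^sup>* u v" if "E_R V R u v" for u v
    by (rule rtranclp_if_descending_detours[OF wf_edge_order[OF \<open>finite V\<close>]
          E_R_edge_detour[OF _ \<open>alpha \<le> 5 * pi / 6\<close>] that])
  have "E_nr V r k alpha ID \<le> E_R V R"
    using E_alpha_imp_E_R by (auto simp: E_nr_def)
  then have "(E_nr V r k alpha ID)\<^sup>*\<^sup>* \<le> (E_R V R)\<^sup>*\<^sup>*"
    by (rule rtranclp_mono)
  moreover have "(E_R V R)\<^sup>*\<^sup>* \<le> (E_nr V r k alpha ID)\<^sup>*\<^sup>*"
    using rtranclp_mono[of "E_R V R" "(E_nr V r k alpha ID)\<^sup>*\<^sup>*"] E_nr_path_if_E_R by auto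
  moreover have "E_R V R u v" if "redundant V r k alpha ID u v" for u v
    using that E_alpha_imp_E_R by (auto simp: redundant_def)
  ultimately show ?thesis
    using E_nr_path_if_E_R by (auto simp: le_fun_def)
qed

end
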